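(* Let $A\in\mathbb{R}^{m\times n}$, $b\in\mathbb{R}^m$, $1\le k\le n$, and let $p$ be an LPM polynomial of degree $k$ on $n\times n$ symmetric matrices with nonnegative coefficients such that $p(A^{\intercal}A)\neq 0$. Consider the sparse QCQP with $A_1=A^{\intercal}A$ and $A_0=A^{\intercal}bb^{\intercal}A$ (i.e. maximize $x^{\intercal}A^{\intercal}bb^{\intercal}Ax$ subject to $x^{\intercal}A^{\intercal}Ax=1$, $|\mathrm{supp}(x)|\le k$). Then the largest real root $\eta_p$ of the univariate polynomial $t\mapsto p(A^{\intercal}A\,t-A^{\intercal}bb^{\intercal}A)$ equals $$\eta_p=\frac{p(A^{\intercal}(I+bb^{\intercal})A)}{p(A^{\intercal}A)}-1.$$
   Context: An LPM polynomial of degree $k$ is a polynomial in a symmetric $n\times n$ matrix $X$, not identically zero, of the form $p(X)=\sum_{S\subseteq[n],|S|=k}a_S\det(X|_S)$, where $X|_S$ is the principal submatrix indexed by $S$. $\mathrm{supp}(x)=\{i:x_i\ne0\}$. *)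

theory Defs
  imports "Jordan_Normal_Form.Determinant" "Jordan_Normal_Form.DL_Submatrix"
begin

definition ksubsets :: "nat \<Rightarrow> nat \<Rightarrow> nat set set" where
  "ksubsets n k = {S. S \<subseteq> {0..<n} \<and> card S = k}"

definition lpm_eval :: "nat \<Rightarrow> nat \<Rightarrow> (nat set \<Rightarrow> real) \<Rightarrow> real mat \<Rightarrow> real" where
  "lpm_eval n k a X = (\<Sum>S\<in>ksubsets n k. a S * det (submatrix X S S))"

text \<open>The coefficient family a defines an LPM polynomial of degree k
  (not identically zero; the k x k principal minors are linearly independent).\<close>
definition is_lpm :: "nat \<Rightarrow> nat \<Rightarrow> (nat set \<Rightarrow> real) \<Rightarrow> bool" where
  "is_lpm n k a \<longleftrightarrow> (\<exists>S\<in>ksubsets n k. a S \<noteq> 0)"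

definition outer :: "real vec \<Rightarrow> real mat" where
  "outer b = mat (dim_vec b) (dim_vec b) (\<lambda>(i,j). b $ i * b $ j)"

definition is_largest_real_root :: "(real \<Rightarrow> real) \<Rightarrow> real \<Rightarrow> bool" where
  "is_largest_real_root q r \<longleftrightarrow> q r = 0 \<and> (\<forall>t. q t = 0 \<longrightarrow> t \<le> r)"

end

theory Submission
  imports Defs
begin

(* For a k-subset S, the principal submatrix G of A^T A is a Gram matrix, hence positive
   semidefinite, and A^T b b^T A restricts to a rank-one matrix w w^T.  By elimination,
   s \<mapsto> det (G + s w w^T) is affine; it stays nonnegative for s \<ge> 0, so its slope c is
   nonnegative, and homogeneity gives det (t G - w w^T) = t^k det G - t^(k-1) c.  Summing with
   the nonnegative coefficients, p (t A^T A - A^T b b^T A) = t^(k-1) (t P - C) with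
   P = p (A^T A) > 0 and C = p (A^T (I + b b^T) A) - P \<ge> 0, whose largest real root is C / P. *)

lemma isCont_det:
  fixes F :: "real \<Rightarrow> real mat"
  assumes carrier: "\<And>t. F t \<in> carrier_mat k k"
    and entries: "\<And>i j. i < k \<Longrightarrow> j < k \<Longrightarrow> isCont (\<lambda>t. F t $$ (i, j)) t0"
  shows "isCont (\<lambda>t. det (F t)) t0"
proof -
  have "(\<lambda>t. det (F t)) = (\<lambda>t. \<Sum>p | p permutes {0..<k}. signof p * (\<Prod>i = 0..<k. F t $$ (i, p i)))"
    using det_def'[OF carrier] by (rule ext)
  moreover have "isCont (\<lambda>t. F t $$ (i, p i)) t0" if "p permutes {0..<k}" and "i \<in> {0..<k}" for p i
    using that by (intro entries) (auto dest: permutes_in_image)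
  ultimately show ?thesis by (auto intro!: continuous_intros)
qed

lemma isCont_eq_at_point:
  fixes f g :: "real \<Rightarrow> real"
  assumes "isCont f x" and "isCont g x" and "\<And>t. t \<noteq> x \<Longrightarrow> f t = g t"
  shows "f x = g x"
proof (rule tendsto_unique[OF at_neq_bot])
  show "(f \<longlongrightarrow> f x) (at x)" using assms(1) by (simp add: isCont_def)
  have "\<forall>\<^sub>F t in at x. g t = f t" using assms(3) by (simp add: eventually_at_filter)
  then show "(f \<longlongrightarrow> g x) (at x)" using assms(2) isCont_def tendsto_cong by blast
qed

lemma smult_mult_mat_vec:
  fixes A :: "'a :: comm_ring mat"
  assumes "A \<in> carrier_mat nr nc" and "x \<in> carrier_vec nc"
  shows "(c \<cdot>\<^sub>m A) *\<^sub>v x = c \<cdot>\<^sub>v (A *\<^sub>v x)"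
  using assms by (intro eq_vecI) (auto simp: scalar_prod_def sum_distrib_left mult.assoc)

lemma outer_carrier [simp]: "w \<in> carrier_vec k \<Longrightarrow> outer w \<in> carrier_mat k k"
  unfolding outer_def by auto

lemma outer_mult_vec:
  assumes w: "w \<in> carrier_vec k" and x: "x \<in> carrier_vec k"
  shows "outer w *\<^sub>v x = (w \<bullet> x) \<cdot>\<^sub>v w"
  using assms by (intro eq_vecI) (auto simp: outer_def scalar_prod_def sum_distrib_left ac_simps)

(* Only the quadratic form matters below, so symmetry is not part of the definition. *)
definition psd :: "nat \<Rightarrow> real mat \<Rightarrow> bool" where
  "psd k G \<longleftrightarrow> (\<forall>x \<in> carrier_vec k. 0 \<le> x \<bullet> (G *\<^sub>v x))"

lemma psd_gram:
  assumes C: "C \<in> carrier_mat m k"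
  shows "psd k (transpose_mat C * C)"
  unfolding psd_def
proof
  fix x :: "real vec" assume x: "x \<in> carrier_vec k"
  have "x \<bullet> ((transpose_mat C * C) *\<^sub>v x) = (transpose_mat C *\<^sub>v (C *\<^sub>v x)) \<bullet> x"
    using C x by (simp add: comm_scalar_prod[of _ k])
  also have "\<dots> = (C *\<^sub>v x) \<bullet> (C *\<^sub>v x)"
    using C x by (intro transpose_vec_mult_scalar) auto
  finally show "0 \<le> x \<bullet> ((transpose_mat C * C) *\<^sub>v x)"
    using conjugate_square_ge_0_vec[of "C *\<^sub>v x"] by simp
qed

lemma psd_add_smult_outer:
  assumes G: "G \<in> carrier_mat k k" and w: "w \<in> carrier_vec k" and "psd k G" and "0 \<le> s"
  shows "psd k (G + s \<cdot>\<^sub>m outer w)"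
  unfolding psd_def
proof
  fix x :: "real vec" assume x: "x \<in> carrier_vec k"
  have "x \<bullet> ((G + s \<cdot>\<^sub>m outer w) *\<^sub>v x) = x \<bullet> (G *\<^sub>v x) + s * (w \<bullet> x)\<^sup>2"
    using G w x by (simp add: add_mult_distrib_mat_vec[of _ k k] smult_mult_mat_vec[of _ k k]
        outer_mult_vec scalar_prod_add_distrib[of _ k] comm_scalar_prod[of x k w] power2_eq_square)
  then show "0 \<le> x \<bullet> ((G + s \<cdot>\<^sub>m outer w) *\<^sub>v x)"
    using \<open>psd k G\<close> \<open>0 \<le> s\<close> x unfolding psd_def by simp
qed

lemma det_convex_comb_one_psd_nonzero:
  assumes G: "G \<in> carrier_mat k k" and "psd k G" and "0 \<le> u" and "u < 1"
  shows "det (u \<cdot>\<^sub>m G + (1 - u) \<cdot>\<^sub>m 1\<^sub>m k) \<noteq> 0"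
proof
  let ?H = "u \<cdot>\<^sub>m G + (1 - u) \<cdot>\<^sub>m 1\<^sub>m k"
  assume "det ?H = 0"
  then obtain x where x: "x \<in> carrier_vec k" "x \<noteq> 0\<^sub>v k" and Hx: "?H *\<^sub>v x = 0\<^sub>v k"
    using det_0_iff_vec_prod_zero[of ?H k] G by auto
  have "x \<bullet> (?H *\<^sub>v x) = u * (x \<bullet> (G *\<^sub>v x)) + (1 - u) * (x \<bullet> x)"
    using G x by (simp add: add_mult_distrib_mat_vec[of _ k k] smult_mult_mat_vec[of _ k k]
        scalar_prod_add_distrib[of _ k])
  also have "\<dots> > 0"
    using \<open>psd k G\<close> \<open>0 \<le> u\<close> \<open>u < 1\<close> x conjugate_square_greater_0_vec[of x k]
    unfolding psd_def by (simp add: add_nonneg_pos)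
  finally show False using Hx x by simp
qed

lemma psd_det_nonneg:
  assumes G: "G \<in> carrier_mat k k" and "psd k G"
  shows "0 \<le> det G"
proof (rule ccontr)
  \<comment> \<open>Intermediate values along the segment from the identity (det = 1) to G.\<close>
  define H where "H u = u \<cdot>\<^sub>m G + (1 - u) \<cdot>\<^sub>m 1\<^sub>m k" for u :: real
  assume "\<not> 0 \<le> det G"
  moreover have "H 1 = G" "H 0 = 1\<^sub>m k" using G unfolding H_def by auto
  moreover have "isCont (\<lambda>u. det (H u)) u" for u
    using G unfolding H_def by (intro isCont_det[of _ k]) (auto intro!: continuous_intros)
  ultimately obtain u where "0 \<le> u" "u \<le> 1" "det (H u) = 0"
    using IVT2[of "\<lambda>u. det (H u)" 1 0 0] by auto
  moreover from this have "u \<noteq> 1" using \<open>H 1 = G\<close> \<open>\<not> 0 \<le> det G\<close> by auto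
  ultimately show False
    using det_convex_comb_one_psd_nonzero[OF G \<open>psd k G\<close>] unfolding H_def by force
qed

lemma det_add_smult_single_row:
  fixes Y R :: "'a :: comm_ring_1 mat"
  assumes Y: "Y \<in> carrier_mat k k" and R: "R \<in> carrier_mat k k" and r: "r < k"
    and R_row: "\<And>i j. i < k \<Longrightarrow> j < k \<Longrightarrow> i \<noteq> r \<Longrightarrow> R $$ (i, j) = 0"
  shows "det (Y + s \<cdot>\<^sub>m R) = det Y + s * (\<Sum>j<k. R $$ (r, j) * cofactor Y r j)"
proof -
  have "mat_delete (Y + s \<cdot>\<^sub>m R) r j = mat_delete Y r j" for j
    using Y R r R_row by (intro eq_matI) (auto simp: mat_delete_def)
  then have cof: "cofactor (Y + s \<cdot>\<^sub>m R) r j = cofactor Y r j" for j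
    by (simp add: cofactor_def)
  have "det (Y + s \<cdot>\<^sub>m R) = (\<Sum>j<k. (Y + s \<cdot>\<^sub>m R) $$ (r, j) * cofactor (Y + s \<cdot>\<^sub>m R) r j)"
    using Y R r by (intro laplace_expansion_row) auto
  also have "\<dots> = (\<Sum>j<k. Y $$ (r, j) * cofactor Y r j) + s * (\<Sum>j<k. R $$ (r, j) * cofactor Y r j)"
    using Y R r by (simp add: cof algebra_simps sum.distrib sum_distrib_left)
  also have "(\<Sum>j<k. Y $$ (r, j) * cofactor Y r j) = det Y"
    using Y r by (intro laplace_expansion_row[symmetric])
  finally show ?thesis .
qed

lemma outer_row_elimination:
  fixes w :: "real vec"
  assumes w: "w \<in> carrier_vec k" and "w \<noteq> 0\<^sub>v k"
  obtains E r where "E \<in> carrier_mat k k" and "det E = 1" and "r < k"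
    and "\<And>i j. i < k \<Longrightarrow> j < k \<Longrightarrow> i \<noteq> r \<Longrightarrow> (E * outer w) $$ (i, j) = 0"
proof -
  obtain r where r: "r < k" "w $ r \<noteq> 0" and below: "\<And>i. i < r \<Longrightarrow> w $ i = 0"
    using assms exists_least_iff[of "\<lambda>i. i < k \<and> w $ i \<noteq> 0"]
    by (metis eq_vecI carrier_vecD index_zero_vec order.strict_trans)
  \<comment> \<open>Clear every row of outer w except row r; since r is the least index with w $ r \<noteq> 0,
    this elimination matrix is unit lower triangular.\<close>
  define E where "E = mat k k (\<lambda>(i, j). if i = j then 1 else if j = r then - (w $ i / w $ r) else 0)"
  have E: "E \<in> carrier_mat k k" unfolding E_def by simp
  have "det E = prod_list (diag_mat E)"
    using below E by (intro det_lower_triangular[of k]) (auto simp: E_def)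
  also have "\<dots> = 1" using E by (simp add: prod_list_diag_prod E_def)
  finally have "det E = 1" .
  moreover have "(E * outer w) $$ (i, j) = 0" if "i < k" "j < k" "i \<noteq> r" for i j
  proof -
    have "(E * outer w) $$ (i, j)
        = (\<Sum>l<k. (if l = i then w $ i * w $ j else 0) - (if l = r then w $ i * w $ j else 0))"
      using that w r unfolding E_def by (auto simp: scalar_prod_def outer_def intro!: sum.cong)
    also have "\<dots> = 0" using that r by (simp add: sum_subtractf)
    finally show ?thesis .
  qed
  ultimately show ?thesis using that E r by blast
qed

lemma det_add_smult_outer:
  fixes G :: "real mat"
  assumes G: "G \<in> carrier_mat k k" and w: "w \<in> carrier_vec k"
  shows "det (G + s \<cdot>\<^sub>m outer w) = det G + s * (det (G + outer w) - det G)"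
proof -
  have "\<exists>c. \<forall>s. det (G + s \<cdot>\<^sub>m outer w) = det G + s * c"
  proof (cases "w = 0\<^sub>v k")
    case True
    then have "G + s \<cdot>\<^sub>m outer w = G" for s
      using G by (intro eq_matI) (auto simp: outer_def)
    then show ?thesis by simp
  next
    case False
    then obtain E r where E: "E \<in> carrier_mat k k" "det E = 1" and r: "r < k"
      and rows: "\<And>i j. i < k \<Longrightarrow> j < k \<Longrightarrow> i \<noteq> r \<Longrightarrow> (E * outer w) $$ (i, j) = 0"
      using outer_row_elimination[OF w] by blast
    define c where "c = (\<Sum>j<k. (E * outer w) $$ (r, j) * cofactor (E * G) r j)"
    have "det (G + s \<cdot>\<^sub>m outer w) = det G + s * c" for s
    proof -
      have "det (G + s \<cdot>\<^sub>m outer w) = det (E * (G + s \<cdot>\<^sub>m outer w))"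
        using G w E by (simp add: det_mult[of E k])
      also have "E * (G + s \<cdot>\<^sub>m outer w) = E * G + s \<cdot>\<^sub>m (E * outer w)"
        using G w E
        by (simp add: mult_add_distrib_mat[of E k k] mult_smult_distrib[OF _ outer_carrier[OF w]])
      also have "det \<dots> = det G + s * c"
        using G w E r rows by (simp add: c_def det_add_smult_single_row[of _ k] det_mult[of E k])
      finally show ?thesis .
    qed
    then show ?thesis by blast
  qed
  then obtain c where c: "\<And>s. det (G + s \<cdot>\<^sub>m outer w) = det G + s * c" by blast
  have "G + 1 \<cdot>\<^sub>m outer w = G + outer w"
    using G w by (intro eq_matI) auto
  with c[of 1] have "c = det (G + outer w) - det G" by simp
  then show ?thesis using c by simp
qed

lemma psd_det_le_det_add_outer:
  assumes G: "G \<in> carrier_mat k k" and w: "w \<in> carrier_vec k" and "psd k G"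
  shows "det G \<le> det (G + outer w)"
proof (rule ccontr)
  define c where "c = det (G + outer w) - det G"
  assume "\<not> det G \<le> det (G + outer w)"
  then have "c < 0" unfolding c_def by simp
  define s where "s = (det G + 1) / - c"
  have "0 \<le> det G" using psd_det_nonneg[OF G \<open>psd k G\<close>] .
  with \<open>c < 0\<close> have "0 \<le> s" unfolding s_def by (simp add: divide_nonneg_neg)
  then have "0 \<le> det (G + s \<cdot>\<^sub>m outer w)"
    using G w \<open>psd k G\<close> by (intro psd_det_nonneg[of _ k] psd_add_smult_outer) auto
  moreover have "det (G + s \<cdot>\<^sub>m outer w) = det G + s * c"
    using det_add_smult_outer[OF G w] unfolding c_def .
  moreover have "det G + s * c = -1"
    using \<open>c < 0\<close> unfolding s_def by (simp add: field_simps)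
  ultimately show False by simp
qed

lemma det_smult_minus_outer:
  fixes G :: "real mat"
  assumes G: "G \<in> carrier_mat k k" and w: "w \<in> carrier_vec k" and "1 \<le> k"
  shows "det (t \<cdot>\<^sub>m G - outer w) = t ^ k * det G - t ^ (k - 1) * (det (G + outer w) - det G)"
    (is "?f t = ?g t")
proof -
  have pow: "x ^ k = x * x ^ (k - 1)" for x :: real
    using \<open>1 \<le> k\<close> by (simp add: power_eq_if)
  have off_zero: "?f t = ?g t" if "t \<noteq> 0" for t
  proof -
    have "t \<cdot>\<^sub>m G - outer w = t \<cdot>\<^sub>m (G + (- 1 / t) \<cdot>\<^sub>m outer w)"
      using G outer_carrier[OF w] that by (intro eq_matI) (auto simp: field_simps)
    then have "?f t = t ^ k * (det G + (- 1 / t) * (det (G + outer w) - det G))"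
      using G w by (simp add: det_add_smult_outer carrier_matD[OF outer_carrier[OF w]])
    also have "\<dots> = ?g t"
      using that by (simp add: pow field_simps)
    finally show ?thesis .
  qed
  show ?thesis
  proof (cases "t = 0")
    case True
    \<comment> \<open>The rescaling breaks down at t = 0; both sides are continuous in t.\<close>
    have "isCont ?f 0"
      using G outer_carrier[OF w]
      by (intro isCont_det[of _ k]) (auto simp: minus_carrier_mat intro!: continuous_intros)
    moreover have "isCont ?g 0" by (intro continuous_intros)
    ultimately show ?thesis
      using isCont_eq_at_point off_zero True by blast
  qed (rule off_zero)
qed


lemma submatrix_add:
  assumes "X \<in> carrier_mat nr nc" and "Y \<in> carrier_mat nr nc"
  shows "submatrix (X + Y) I J = submatrix X I J + submatrix Y I J"
  using assms by (intro eq_matI) (auto simp: submatrix_def pick_le)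

lemma submatrix_minus:
  fixes X Y :: "'a :: ab_group_add mat"
  assumes "X \<in> carrier_mat nr nc" and "Y \<in> carrier_mat nr nc"
  shows "submatrix (X - Y) I J = submatrix X I J - submatrix Y I J"
  using assms by (intro eq_matI) (auto simp: submatrix_def pick_le)

lemma submatrix_smult: "submatrix (t \<cdot>\<^sub>m X) I J = t \<cdot>\<^sub>m submatrix X I J"
  by (intro eq_matI) (auto simp: submatrix_def pick_le)

lemma submatrix_outer:
  "submatrix (outer w) I I = outer (vec (card {i. i < dim_vec w \<and> i \<in> I}) (\<lambda>i. w $ pick I i))"
  by (intro eq_matI) (auto simp: submatrix_def outer_def pick_le)

lemma submatrix_gram:
  fixes A :: "'a :: comm_semiring_0 mat"
  assumes A: "A \<in> carrier_mat m n"
  shows "submatrix (transpose_mat A * A) I I = transpose_mat (submatrix A UNIV I) * submatrix A UNIV I"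
proof (rule eq_matI)
  fix i j
  assume "i < dim_row (transpose_mat (submatrix A UNIV I) * submatrix A UNIV I)"
    and "j < dim_col (transpose_mat (submatrix A UNIV I) * submatrix A UNIV I)"
  then have ij: "i < card {i. i < n \<and> i \<in> I}" "j < card {i. i < n \<and> i \<in> I}"
    using A by (auto simp: dim_submatrix)
  have "submatrix (transpose_mat A * A) I I $$ (i, j) = (\<Sum>l = 0..<m. A $$ (l, pick I i) * A $$ (l, pick I j))"
    using A ij pick_le[OF ij(1)] pick_le[OF ij(2)] by (simp add: submatrix_index scalar_prod_def)
  also have "\<dots> = (transpose_mat (submatrix A UNIV I) * submatrix A UNIV I) $$ (i, j)"
    using A ij by (auto simp: dim_submatrix submatrix_index scalar_prod_def pick_UNIV intro!: sum.cong)
  finally show "submatrix (transpose_mat A * A) I I $$ (i, j) = (transpose_mat (submatrix A UNIV I) * submatrix A UNIV I) $$ (i, j)" .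
qed (use A in \<open>auto simp: dim_submatrix\<close>)

lemma card_ksubsets:
  assumes "S \<in> ksubsets n k"
  shows "card {i. i < n \<and> i \<in> S} = k"
proof -
  have "{i. i < n \<and> i \<in> S} = S" using assms unfolding ksubsets_def by auto
  then show ?thesis using assms unfolding ksubsets_def by simp
qed

lemma ksubsets_submatrix_carrier:
  assumes "S \<in> ksubsets n k" and "M \<in> carrier_mat n n"
  shows "submatrix M S S \<in> carrier_mat k k"
  using card_ksubsets[OF assms(1)] assms(2) by (intro carrier_matI) (auto simp: dim_submatrix)

lemma ksubsets_submatrix_outer:
  assumes "S \<in> ksubsets n k" and "w \<in> carrier_vec n"
  shows "submatrix (outer w) S S = outer (vec k (\<lambda>i. w $ pick S i))"
  using card_ksubsets[OF assms(1)] assms(2) by (simp add: submatrix_outer)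

lemma psd_submatrix_gram:
  assumes A: "A \<in> carrier_mat m n" and S: "S \<in> ksubsets n k"
  shows "psd k (submatrix (transpose_mat A * A) S S)"
proof -
  have "submatrix A UNIV S \<in> carrier_mat m k"
    using A card_ksubsets[OF S] by (intro carrier_matI) (auto simp: dim_submatrix)
  then show ?thesis unfolding submatrix_gram[OF A] by (rule psd_gram)
qed

lemma lpm_eval_smult_minus_outer:
  assumes M: "M \<in> carrier_mat n n" and w: "w \<in> carrier_vec n" and "1 \<le> k"
  shows "lpm_eval n k a (t \<cdot>\<^sub>m M - outer w)
    = t ^ k * lpm_eval n k a M - t ^ (k - 1) * (lpm_eval n k a (M + outer w) - lpm_eval n k a M)"
proof -
  have "a S * det (submatrix (t \<cdot>\<^sub>m M - outer w) S S)
      = t ^ k * (a S * det (submatrix M S S))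
        - t ^ (k - 1) * (a S * det (submatrix (M + outer w) S S) - a S * det (submatrix M S S))"
    if S: "S \<in> ksubsets n k" for S
  proof -
    let ?wS = "vec k (\<lambda>i. w $ pick S i)"
    have "submatrix (t \<cdot>\<^sub>m M - outer w) S S = t \<cdot>\<^sub>m submatrix M S S - outer ?wS"
      using M w S by (simp add: submatrix_minus[of _ n n] submatrix_smult ksubsets_submatrix_outer)
    moreover have "submatrix (M + outer w) S S = submatrix M S S + outer ?wS"
      using M w S by (simp add: submatrix_add[of _ n n] ksubsets_submatrix_outer)
    ultimately have det_S: "det (submatrix (t \<cdot>\<^sub>m M - outer w) S S) = t ^ k * det (submatrix M S S)
        - t ^ (k - 1) * (det (submatrix (M + outer w) S S) - det (submatrix M S S))"
      using det_smult_minus_outer[OF ksubsets_submatrix_carrier[OF S M] _ \<open>1 \<le> k\<close>] by simp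
    show ?thesis unfolding det_S by (simp add: algebra_simps)
  qed
  then show ?thesis
    unfolding lpm_eval_def by (simp add: sum_subtractf sum_distrib_left right_diff_distrib)
qed

lemma lpm_eval_nonneg:
  assumes M: "M \<in> carrier_mat n n" and "\<And>S. 0 \<le> a S"
    and psd: "\<And>S. S \<in> ksubsets n k \<Longrightarrow> psd k (submatrix M S S)"
  shows "0 \<le> lpm_eval n k a M"
  unfolding lpm_eval_def
proof (intro sum_nonneg mult_nonneg_nonneg)
  fix S assume S: "S \<in> ksubsets n k"
  show "0 \<le> det (submatrix M S S)"
    using psd_det_nonneg[OF ksubsets_submatrix_carrier[OF S M] psd[OF S]] .
qed (rule assms)

lemma lpm_eval_le_add_outer:
  assumes M: "M \<in> carrier_mat n n" and w: "w \<in> carrier_vec n" and "\<And>S. 0 \<le> a S"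
    and psd: "\<And>S. S \<in> ksubsets n k \<Longrightarrow> psd k (submatrix M S S)"
  shows "lpm_eval n k a M \<le> lpm_eval n k a (M + outer w)"
  unfolding lpm_eval_def
proof (intro sum_mono mult_left_mono)
  fix S assume S: "S \<in> ksubsets n k"
  have "submatrix (M + outer w) S S = submatrix M S S + outer (vec k (\<lambda>i. w $ pick S i))"
    using M w S by (simp add: submatrix_add[of _ n n] ksubsets_submatrix_outer)
  then show "det (submatrix M S S) \<le> det (submatrix (M + outer w) S S)"
    using psd_det_le_det_add_outer[OF ksubsets_submatrix_carrier[OF S M] _ psd[OF S]] by simp
qed (rule assms)

lemma is_largest_real_root_pow_affine:
  fixes P Q :: real
  assumes "0 < P" and "P \<le> Q" and "1 \<le> k"
  shows "is_largest_real_root (\<lambda>t. t ^ k * P - t ^ (k - 1) * (Q - P)) (Q / P - 1)"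
proof -
  have factor: "t ^ k * P - t ^ (k - 1) * (Q - P) = t ^ (k - 1) * (t * P - (Q - P))" for t :: real
    using \<open>1 \<le> k\<close> by (simp add: power_eq_if algebra_simps)
  have "0 \<le> Q / P - 1" using assms by simp
  moreover have "t * P - (Q - P) = 0 \<longleftrightarrow> t = Q / P - 1" for t
    using \<open>0 < P\<close> by (auto simp: field_simps)
  ultimately show ?thesis
    unfolding is_largest_real_root_def factor by auto
qed

lemma transpose_mult_outer_mult:
  fixes A :: "real mat"
  assumes A: "A \<in> carrier_mat m n" and b: "b \<in> carrier_vec m"
  shows "transpose_mat A * outer b * A = outer (transpose_mat A *\<^sub>v b)"
proof -
  define w where "w = transpose_mat A *\<^sub>v b"
  have w_index: "w $ j = (\<Sum>l = 0..<m. b $ l * A $$ (l, j))" if "j < n" for j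
    unfolding w_def using A b that by (simp add: scalar_prod_def mult.commute)
  have "transpose_mat A * outer b = mat n m (\<lambda>(i, l). w $ i * b $ l)"
    unfolding w_def using A b
    by (intro eq_matI) (auto simp: outer_def scalar_prod_def sum_distrib_left ac_simps)
  also have "\<dots> * A = outer w"
  proof (rule eq_matI)
    fix i j assume "i < dim_row (outer w)" "j < dim_col (outer w)"
    then have ij: "i < n" "j < n" using A unfolding w_def outer_def by auto
    have "(mat n m (\<lambda>(i, l). w $ i * b $ l) * A) $$ (i, j) = (\<Sum>l = 0..<m. w $ i * (b $ l * A $$ (l, j)))"
      using A ij by (simp add: scalar_prod_def mult.assoc)
    also have "\<dots> = w $ i * w $ j"
      using ij by (simp add: w_index sum_distrib_left[symmetric])
    finally show "(mat n m (\<lambda>(i, l). w $ i * b $ l) * A) $$ (i, j) = outer w $$ (i, j)"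
      using A ij unfolding w_def outer_def by simp
  qed (use A in \<open>auto simp: w_def outer_def\<close>)
  finally show ?thesis unfolding w_def .
qed

lemma transpose_mult_one_plus_outer_mult:
  fixes A :: "real mat"
  assumes A: "A \<in> carrier_mat m n" and b: "b \<in> carrier_vec m"
  shows "transpose_mat A * (1\<^sub>m m + outer b) * A = transpose_mat A * A + transpose_mat A * outer b * A"
proof -
  have At: "transpose_mat A \<in> carrier_mat n m" and ob: "outer b \<in> carrier_mat m m"
    using A b by simp_all
  have "transpose_mat A * (1\<^sub>m m + outer b) = transpose_mat A + transpose_mat A * outer b"
    using mult_add_distrib_mat[OF At one_carrier_mat ob] At by simp
  then show ?thesis
    using add_mult_distrib_mat[OF At _ A, of "transpose_mat A * outer b"] At ob by simp
qed

theorem mainTheorem3: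
  fixes A :: "real mat" and b :: "real vec" and m n k :: nat and a :: "nat set \<Rightarrow> real"
  assumes "A \<in> carrier_mat m n" and "b \<in> carrier_vec m"
    and "1 \<le> k" and "k \<le> n"
    and "is_lpm n k a" and "\<forall>S. a S \<ge> 0"
    and "lpm_eval n k a (transpose_mat A * A) \<noteq> 0"
  shows "is_largest_real_root
           (\<lambda>t. lpm_eval n k a (t \<cdot>\<^sub>m (transpose_mat A * A) - transpose_mat A * outer b * A))
           (lpm_eval n k a (transpose_mat A * (1\<^sub>m m + outer b) * A) / lpm_eval n k a (transpose_mat A * A) - 1)"
proof -
  note A = assms(1) and b = assms(2)
  define M where "M = transpose_mat A * A"
  define w where "w = transpose_mat A *\<^sub>v b"
  have M: "M \<in> carrier_mat n n" and w: "w \<in> carrier_vec n"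
    unfolding M_def w_def using A b by auto
  have rank_one: "transpose_mat A * outer b * A = outer w"
    unfolding w_def using A b by (rule transpose_mult_outer_mult)
  have psd: "psd k (submatrix M S S)" if "S \<in> ksubsets n k" for S
    unfolding M_def using A that by (rule psd_submatrix_gram)
  have "0 \<le> lpm_eval n k a M"
    using M assms(6) psd by (intro lpm_eval_nonneg) auto
  with assms(7) have "0 < lpm_eval n k a M" unfolding M_def by simp
  moreover have "lpm_eval n k a M \<le> lpm_eval n k a (M + outer w)"
    using M w assms(6) psd by (intro lpm_eval_le_add_outer) auto
  ultimately show ?thesis
    unfolding transpose_mult_one_plus_outer_mult[OF A b] rank_one M_def[symmetric]
      lpm_eval_smult_minus_outer[OF M w \<open>1 \<le> k\<close>]
    by (intro is_largest_real_root_pow_affine \<open>1 \<le> k\<close>)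
qed

end
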